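(* The first $\varepsilon\tau$-theorem holds in $\varepsilon\tau(\mathbf{LC})$ for $\varepsilon\tau$-free formulas: if $D$ is a quantifier-free formula containing no $\varepsilon\tau$-terms and $\vdash_{\varepsilon\tau(\mathbf{LC})}D$, then $\vdash_{\mathbf{LC}}D$.
   Context: $\mathbf{LC}$ is the intermediate propositional logic axiomatized over intuitionistic propositional logic by $\mathit{Lin}$: $(A\to B)\lor(B\to A)$ (infinite-valued Gödel logic). $\varepsilon\tau$-terms: $\varepsilon x\,A(x)$, $\tau x\,A(x)$ for formulas $A(x)$. Critical formulas: $A(t)\to A(\varepsilon x\,A(x))$ and $A(\tau x\,A(x))\to A(t)$. $\vdash_{\varepsilon\tau(\mathbf{L})}B$: $B$ derivable in the quantifier-free first-order language with $\varepsilon\tau$-terms from critical formulas using substitution instances of theorems of $\mathbf{L}$ and modus ponens; $\vdash_{\mathbf{L}}$ is the same without critical formulas. *)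

theory Defs
  imports Main
begin

datatype pform =
    PVar nat
  | PBot
  | PAnd pform pform
  | POr pform pform
  | PImp pform pform

inductive LC_thm :: "pform \<Rightarrow> bool" where
  ax_K:    "LC_thm (PImp A (PImp B A))"
| ax_S:    "LC_thm (PImp (PImp A (PImp B C)) (PImp (PImp A B) (PImp A C)))"
| ax_and1: "LC_thm (PImp (PAnd A B) A)"
| ax_and2: "LC_thm (PImp (PAnd A B) B)"
| ax_andI: "LC_thm (PImp A (PImp B (PAnd A B)))"
| ax_or1:  "LC_thm (PImp A (POr A B))"
| ax_or2:  "LC_thm (PImp B (POr A B))"
| ax_orE:  "LC_thm (PImp (PImp A C) (PImp (PImp B C) (PImp (POr A B) C)))"
| ax_efq:  "LC_thm (PImp PBot A)"
| ax_lin:  "LC_thm (POr (PImp A B) (PImp B A))"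
| mp:      "LC_thm (PImp A B) \<Longrightarrow> LC_thm A \<Longrightarrow> LC_thm B"

text \<open>Locally nameless representation: free variables are named (Free),
  the variable bound by an epsilon/tau operator is a de Bruijn index (Bnd).
  Eps A represents epsilon x A(x), where A(x) is A with Bnd 0 (at top level)
  standing for x.\<close>

datatype ('f, 'p) trm =
    Free nat
  | Bnd nat
  | Fn 'f "('f, 'p) trm list"
  | Eps "('f, 'p) fm"
  | Tau "('f, 'p) fm"
and ('f, 'p) fm =
    Atom 'p "('f, 'p) trm list"
  | Bot
  | And "('f, 'p) fm" "('f, 'p) fm"
  | Or "('f, 'p) fm" "('f, 'p) fm"
  | Imp "('f, 'p) fm" "('f, 'p) fm"

text \<open>Opening: replace the bound index k by the term t (capture-free
  substitution A(t) for the bound variable).\<close>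

primrec opent :: "nat \<Rightarrow> ('f, 'p) trm \<Rightarrow> ('f, 'p) trm \<Rightarrow> ('f, 'p) trm"
and openf :: "nat \<Rightarrow> ('f, 'p) trm \<Rightarrow> ('f, 'p) fm \<Rightarrow> ('f, 'p) fm" where
  "opent k t (Free x) = Free x"
| "opent k t (Bnd n) = (if n = k then t else Bnd n)"
| "opent k t (Fn f ts) = Fn f (map (opent k t) ts)"
| "opent k t (Eps A) = Eps (openf (Suc k) t A)"
| "opent k t (Tau A) = Tau (openf (Suc k) t A)"
| "openf k t (Atom P ts) = Atom P (map (opent k t) ts)"
| "openf k t Bot = Bot"
| "openf k t (And A B) = And (openf k t A) (openf k t B)"
| "openf k t (Or A B) = Or (openf k t A) (openf k t B)"
| "openf k t (Imp A B) = Imp (openf k t A) (openf k t B)"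

text \<open>Local closedness: all de Bruijn indices are bound (below depth k).
  Well-formed terms/formulas are those with lct 0 / lcf 0.\<close>

primrec lct :: "nat \<Rightarrow> ('f, 'p) trm \<Rightarrow> bool"
and lcf :: "nat \<Rightarrow> ('f, 'p) fm \<Rightarrow> bool" where
  "lct k (Free x) = True"
| "lct k (Bnd n) = (n < k)"
| "lct k (Fn f ts) = list_all (lct k) ts"
| "lct k (Eps A) = lcf (Suc k) A"
| "lct k (Tau A) = lcf (Suc k) A"
| "lcf k (Atom P ts) = list_all (lct k) ts"
| "lcf k Bot = True"
| "lcf k (And A B) = (lcf k A \<and> lcf k B)"
| "lcf k (Or A B) = (lcf k A \<and> lcf k B)"
| "lcf k (Imp A B) = (lcf k A \<and> lcf k B)"

primrec et_free_t :: "('f, 'p) trm \<Rightarrow> bool"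
and et_free :: "('f, 'p) fm \<Rightarrow> bool" where
  "et_free_t (Free x) = True"
| "et_free_t (Bnd n) = True"
| "et_free_t (Fn f ts) = list_all et_free_t ts"
| "et_free_t (Eps A) = False"
| "et_free_t (Tau A) = False"
| "et_free (Atom P ts) = list_all et_free_t ts"
| "et_free Bot = True"
| "et_free (And A B) = (et_free A \<and> et_free B)"
| "et_free (Or A B) = (et_free A \<and> et_free B)"
| "et_free (Imp A B) = (et_free A \<and> et_free B)"

primrec psubst :: "(nat \<Rightarrow> ('f, 'p) fm) \<Rightarrow> pform \<Rightarrow> ('f, 'p) fm" where
  "psubst \<sigma> (PVar i) = \<sigma> i"
| "psubst \<sigma> PBot = Bot"
| "psubst \<sigma> (PAnd A B) = And (psubst \<sigma> A) (psubst \<sigma> B)"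
| "psubst \<sigma> (POr A B) = Or (psubst \<sigma> A) (psubst \<sigma> B)"
| "psubst \<sigma> (PImp A B) = Imp (psubst \<sigma> A) (psubst \<sigma> B)"

inductive critical :: "('f, 'p) fm \<Rightarrow> bool" where
  crit_eps: "lcf 1 A \<Longrightarrow> lct 0 t \<Longrightarrow> critical (Imp (openf 0 t A) (openf 0 (Eps A) A))"
| crit_tau: "lcf 1 A \<Longrightarrow> lct 0 t \<Longrightarrow> critical (Imp (openf 0 (Tau A) A) (openf 0 t A))"

inductive deriv_et_LC :: "('f, 'p) fm \<Rightarrow> bool" where
  et_inst: "LC_thm \<phi> \<Longrightarrow> (\<And>i. lcf 0 (\<sigma> i)) \<Longrightarrow> deriv_et_LC (psubst \<sigma> \<phi>)"
| et_crit: "critical A \<Longrightarrow> deriv_et_LC A"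
| et_mp:   "deriv_et_LC (Imp A B) \<Longrightarrow> deriv_et_LC A \<Longrightarrow> deriv_et_LC B"

inductive deriv_LC :: "('f, 'p) fm \<Rightarrow> bool" where
  L_inst: "LC_thm \<phi> \<Longrightarrow> (\<And>i. lcf 0 (\<sigma> i)) \<Longrightarrow> deriv_LC (psubst \<sigma> \<phi>)"
| L_mp:   "deriv_LC (Imp A B) \<Longrightarrow> deriv_LC A \<Longrightarrow> deriv_LC B"

end

theory Submission
  imports Defs
begin

text \<open>LC is complete for the finite Goedel chains \<open>{0..K}\<close>, where \<open>a \<rightarrow> b\<close> is \<open>K\<close> if \<open>a \<le> b\<close>
  and \<open>b\<close> otherwise: a maximal theory not deriving \<open>D\<close> is prime and linearly preordered
  by implication, and ranking formulas by how many subformulas of \<open>D\<close> they fail to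
  imply yields a valuation refuting \<open>D\<close>.

  Derivations in \<open>\<epsilon>\<tau>(LC)\<close> are sound for the interpretation whose domain is the set of
  terms itself, with atoms taking values in \<open>{0..K}\<close>, \<open>\<epsilon>x A(x)\<close> denoting a term at which
  \<open>A\<close> takes its greatest value and \<open>\<tau>x A(x)\<close> one at which it takes its least value.
  These exist because the chain is finite, and they give every critical formula the
  value \<open>K\<close>. On an \<open>\<epsilon>\<tau>\<close>-free formula the interpretation is just the Goedel valuation
  of its propositional skeleton, so the skeleton is an LC theorem and \<open>D\<close> is a
  substitution instance of it.\<close>

section \<open>Finite Goedel chains\<close>

definition godel_imp :: "nat \<Rightarrow> nat \<Rightarrow> nat \<Rightarrow> nat" where
  "godel_imp K a b = (if a \<le> b then K else b)"

primrec pval :: "nat \<Rightarrow> (nat \<Rightarrow> nat) \<Rightarrow> pform \<Rightarrow> nat" where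
  "pval K w (PVar i) = w i"
| "pval K w PBot = 0"
| "pval K w (PAnd A B) = min (pval K w A) (pval K w B)"
| "pval K w (POr A B) = max (pval K w A) (pval K w B)"
| "pval K w (PImp A B) = godel_imp K (pval K w A) (pval K w B)"

definition godel_valid :: "pform \<Rightarrow> bool" where
  "godel_valid A \<longleftrightarrow> (\<forall>K w. (\<forall>i. w i \<le> K) \<longrightarrow> pval K w A = K)"

lemma pval_le_top: "(\<And>i. w i \<le> K) \<Longrightarrow> pval K w A \<le> K"
  by (induction A) (auto simp: godel_imp_def)

lemma LC_thm_godel_valid:
  assumes "LC_thm A"
  shows "godel_valid A"
  unfolding godel_valid_def
proof (intro allI impI)
  fix K :: nat and w :: "nat \<Rightarrow> nat" assume "\<forall>i. w i \<le> K"
  then have pval_le: "pval K w B \<le> K" for B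
    by (simp add: pval_le_top)
  from assms show "pval K w A = K"
  proof (induction rule: LC_thm.induct)
    case (mp A B)
    then show ?case using pval_le[of B] by (auto simp: godel_imp_def split: if_splits)
  qed (use pval_le in \<open>auto simp: godel_imp_def\<close>)
qed

section \<open>Completeness of LC for finite Goedel chains\<close>

inductive LC_from :: "pform set \<Rightarrow> pform \<Rightarrow> bool" for T where
  from_hyp: "A \<in> T \<Longrightarrow> LC_from T A"
| from_thm: "LC_thm A \<Longrightarrow> LC_from T A"
| from_mp: "LC_from T (PImp A B) \<Longrightarrow> LC_from T A \<Longrightarrow> LC_from T B"

lemma LC_from_empty: "LC_from {} A \<Longrightarrow> LC_thm A"
  by (induction rule: LC_from.induct) (auto intro: LC_thm.mp)

lemma LC_from_mono: "LC_from T A \<Longrightarrow> T \<subseteq> T' \<Longrightarrow> LC_from T' A"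
  by (induction rule: LC_from.induct) (auto intro: LC_from.intros)

lemma LC_imp_refl: "LC_thm (PImp A A)"
  by (meson LC_thm.ax_K LC_thm.ax_S LC_thm.mp)

lemma LC_from_deduction: "LC_from (insert A T) B \<Longrightarrow> LC_from T (PImp A B)"
proof (induction rule: LC_from.induct)
  case (from_hyp B)
  then consider (new_hyp) "B = A" | (old_hyp) "B \<in> T" by blast
  then show ?case
  proof cases
    case new_hyp
    then show ?thesis by (simp add: LC_imp_refl LC_from.from_thm)
  next
    case old_hyp
    then show ?thesis by (meson LC_thm.ax_K LC_from.from_hyp LC_from.from_mp LC_from.from_thm)
  qed
next
  case (from_thm B)
  then show ?case by (meson LC_thm.ax_K LC_thm.mp LC_from.from_thm)
next
  case (from_mp B C)
  then show ?case by (meson LC_thm.ax_S LC_from.from_mp LC_from.from_thm)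
qed

lemma LC_from_finite: "LC_from T A \<Longrightarrow> \<exists>F. finite F \<and> F \<subseteq> T \<and> LC_from F A"
proof (induction rule: LC_from.induct)
  case (from_hyp A)
  then show ?case by (intro exI[of _ "{A}"]) (auto intro: LC_from.from_hyp)
next
  case (from_thm A)
  then show ?case by (intro exI[of _ "{}"]) (auto intro: LC_from.from_thm)
next
  case (from_mp A B)
  then obtain F1 F2 where "finite F1" "F1 \<subseteq> T" "LC_from F1 (PImp A B)"
    and "finite F2" "F2 \<subseteq> T" "LC_from F2 A" by blast
  then show ?case
    by (intro exI[of _ "F1 \<union> F2"]) (auto intro: LC_from.from_mp LC_from_mono)
qed

lemma ex_maximal_not_LC_from:
  assumes "\<not> LC_from {} D"
  shows "\<exists>M. \<not> LC_from M D \<and> (\<forall>X. \<not> LC_from X D \<longrightarrow> M \<subseteq> X \<longrightarrow> X = M)"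
proof -
  let ?P = "{T. \<not> LC_from T D}"
  have "\<forall>C\<in>chains ?P. \<Union>C \<in> ?P"
  proof
    fix C assume C: "C \<in> chains ?P"
    show "\<Union>C \<in> ?P"
    proof (cases "C = {}")
      case True
      then show ?thesis using assms by simp
    next
      case False
      have "\<not> LC_from (\<Union>C) D"
      proof
        assume "LC_from (\<Union>C) D"
        then obtain F where F: "finite F" "F \<subseteq> \<Union>C" "LC_from F D"
          using LC_from_finite by blast
        have "subset.chain ?P C" using C by (simp add: chains_alt_def)
        then obtain X where "X \<in> C" "F \<subseteq> X"
          using finite_subset_Union_chain[OF F(1,2) False] by metis
        then have "LC_from X D" using F(3) LC_from_mono by blast
        moreover have "X \<in> ?P" using \<open>X \<in> C\<close> C by (auto simp: chains_def)
        ultimately show False by simp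
      qed
      then show ?thesis by simp
    qed
  qed
  from Zorn_Lemma[OF this] show ?thesis by blast
qed

primrec psubformulas :: "pform \<Rightarrow> pform set" where
  "psubformulas (PVar i) = {PVar i}"
| "psubformulas PBot = {PBot}"
| "psubformulas (PAnd A B) = insert (PAnd A B) (psubformulas A \<union> psubformulas B)"
| "psubformulas (POr A B) = insert (POr A B) (psubformulas A \<union> psubformulas B)"
| "psubformulas (PImp A B) = insert (PImp A B) (psubformulas A \<union> psubformulas B)"

lemma finite_psubformulas: "finite (psubformulas A)"
  by (induction A) auto

lemma psubformulas_refl: "A \<in> psubformulas A"
  by (induction A) auto

locale maximal_not_LC_from =
  fixes T :: "pform set" and D :: pform
  assumes not_LC_from: "\<not> LC_from T D"
    and maximal: "\<And>X. \<not> LC_from X D \<Longrightarrow> T \<subseteq> X \<Longrightarrow> X = T"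
begin

lemma LC_from_insert_not_in: "A \<notin> T \<Longrightarrow> LC_from (insert A T) D"
  using maximal by blast

lemma in_if_LC_from: "LC_from T A \<Longrightarrow> A \<in> T"
  by (meson LC_from_insert_not_in LC_from_deduction from_mp not_LC_from)

lemma LC_thm_in: "LC_thm A \<Longrightarrow> A \<in> T"
  by (intro in_if_LC_from from_thm)

lemma D_not_in: "D \<notin> T"
  using not_LC_from from_hyp by blast

lemma prime: "POr A B \<in> T \<Longrightarrow> A \<in> T \<or> B \<in> T"
  by (meson LC_from_insert_not_in LC_from_deduction LC_thm.ax_orE from_hyp from_mp from_thm
      not_LC_from)

definition le :: "pform \<Rightarrow> pform \<Rightarrow> bool" where
  "le A B \<longleftrightarrow> PImp A B \<in> T"

lemma le_iff_LC_from: "le A B \<longleftrightarrow> LC_from (insert A T) B"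
  unfolding le_def
  by (meson LC_from.intros LC_from_deduction LC_from_mono in_if_LC_from insertI1 subset_insertI)

lemma le_refl: "le A A"
  unfolding le_def by (simp add: LC_imp_refl LC_thm_in)

lemma le_trans:
  assumes "le A B" and "le B C"
  shows "le A C"
proof -
  have "LC_from (insert A T) B" using assms(1) by (simp add: le_iff_LC_from)
  moreover have "LC_from (insert A T) (PImp B C)"
    using assms(2) by (simp add: le_def from_hyp)
  ultimately show ?thesis by (simp add: le_iff_LC_from from_mp)
qed

lemma le_total: "le A B \<or> le B A"
  unfolding le_def using prime LC_thm_in[OF LC_thm.ax_lin] by blast

lemma le_PBot: "le PBot A"
  unfolding le_def by (simp add: LC_thm.ax_efq LC_thm_in)

lemma le_in: "B \<in> T \<Longrightarrow> le A B"
  unfolding le_iff_LC_from by (simp add: from_hyp)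

lemma in_le: "A \<in> T \<Longrightarrow> le A B \<Longrightarrow> B \<in> T"
  unfolding le_def by (meson in_if_LC_from from_hyp from_mp)

lemma le_PAnd_iff: "le A (PAnd B C) \<longleftrightarrow> le A B \<and> le A C"
  unfolding le_iff_LC_from
  by (meson LC_thm.ax_and1 LC_thm.ax_and2 LC_thm.ax_andI from_mp from_thm)

lemma le_POr_iff: "le (POr B C) A \<longleftrightarrow> le B A \<and> le C A"
proof -
  have "le B (POr B C)" "le C (POr B C)"
    unfolding le_def by (simp_all add: LC_thm.ax_or1 LC_thm.ax_or2 LC_thm_in)
  moreover have "le (POr B C) A" if "le B A" "le C A"
    using that unfolding le_def by (meson LC_thm.ax_orE LC_thm_in in_if_LC_from from_hyp from_mp)
  ultimately show ?thesis using le_trans by blast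
qed

lemma le_PImp_conclusion: "le C (PImp B C)"
  unfolding le_def by (simp add: LC_thm.ax_K LC_thm_in)

lemma PImp_le_conclusion:
  assumes "\<not> le B C"
  shows "le (PImp B C) C"
proof -
  have "\<not> le B (PImp B C)"
    using assms unfolding le_iff_LC_from
    by (meson LC_from.from_mp LC_from.from_hyp insertI1)
  with le_total have "le (PImp B C) B" by blast
  then show ?thesis
    unfolding le_iff_LC_from by (meson LC_from.from_mp LC_from.from_hyp insertI1)
qed

definition rank :: "pform \<Rightarrow> nat" where
  "rank A = card {B \<in> psubformulas D. \<not> le A B}"

definition top_rank :: nat where
  "top_rank = card {B \<in> psubformulas D. B \<notin> T}"

lemma rank_mono: "le A A' \<Longrightarrow> rank A \<le> rank A'"
  unfolding rank_def
  by (rule card_mono) (use finite_psubformulas le_trans in auto)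

lemma rank_eq: "le A A' \<Longrightarrow> le A' A \<Longrightarrow> rank A = rank A'"
  by (simp add: order_antisym rank_mono)

lemma rank_less:
  assumes "C \<in> psubformulas D" and "\<not> le A C"
  shows "rank C < rank A"
proof -
  have "le C A" using assms(2) le_total by blast
  then have "{B \<in> psubformulas D. \<not> le C B} \<subseteq> {B \<in> psubformulas D. \<not> le A B}"
    using le_trans by blast
  moreover have "C \<notin> {B \<in> psubformulas D. \<not> le C B}" using le_refl by blast
  ultimately show ?thesis
    unfolding rank_def using assms finite_psubformulas
    by (intro psubset_card_mono) auto
qed

lemma rank_PBot: "rank PBot = 0"
  unfolding rank_def by (simp add: le_PBot)

lemma rank_le_top: "rank A \<le> top_rank"
  unfolding rank_def top_rank_def
  by (rule card_mono) (use finite_psubformulas le_in in auto)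

lemma rank_in: "A \<in> T \<Longrightarrow> rank A = top_rank"
  unfolding rank_def top_rank_def using le_in in_le by metis

lemma rank_D_less_top: "rank D < top_rank"
proof -
  have "{B \<in> psubformulas D. \<not> le D B} \<subseteq> {B \<in> psubformulas D. B \<notin> T}"
    using le_in by blast
  moreover have "D \<in> {B \<in> psubformulas D. B \<notin> T} - {B \<in> psubformulas D. \<not> le D B}"
    using psubformulas_refl D_not_in le_refl by blast
  ultimately show ?thesis
    unfolding rank_def top_rank_def using finite_psubformulas
    by (intro psubset_card_mono) auto
qed

lemma rank_PAnd: "rank (PAnd B C) = min (rank B) (rank C)"
proof -
  have PAnd_le: "le (PAnd B C) B" "le (PAnd B C) C"
    using le_PAnd_iff[of "PAnd B C" B C] le_refl by blast+
  show ?thesis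
  proof (cases "le B C")
    case True
    then have "rank (PAnd B C) = rank B"
      using PAnd_le(1) le_PAnd_iff le_refl by (intro rank_eq) auto
    with True show ?thesis by (simp add: rank_mono min_absorb1)
  next
    case False
    then have "le C B" using le_total by blast
    then have "rank (PAnd B C) = rank C"
      using PAnd_le(2) le_PAnd_iff le_refl by (intro rank_eq) auto
    with \<open>le C B\<close> show ?thesis by (simp add: rank_mono min_absorb2)
  qed
qed

lemma rank_POr: "rank (POr B C) = max (rank B) (rank C)"
proof -
  have le_POr: "le B (POr B C)" "le C (POr B C)"
    using le_POr_iff[of B C "POr B C"] le_refl by blast+
  show ?thesis
  proof (cases "le B C")
    case True
    then have "rank (POr B C) = rank C"
      using le_POr(2) le_POr_iff le_refl by (intro rank_eq) auto
    with True show ?thesis by (simp add: rank_mono max_absorb2)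
  next
    case False
    then have "le C B" using le_total by blast
    then have "rank (POr B C) = rank B"
      using le_POr(1) le_POr_iff le_refl by (intro rank_eq) auto
    with \<open>le C B\<close> show ?thesis by (simp add: rank_mono max_absorb1)
  qed
qed

lemma rank_PImp:
  assumes "C \<in> psubformulas D"
  shows "rank (PImp B C) = godel_imp top_rank (rank B) (rank C)"
proof (cases "le B C")
  case True
  then show ?thesis
    by (simp add: godel_imp_def le_def rank_in rank_mono)
next
  case False
  then show ?thesis
    using rank_less[OF assms False] rank_eq[OF PImp_le_conclusion le_PImp_conclusion]
    by (simp add: godel_imp_def)
qed

lemma pval_rank:
  "psubformulas A \<subseteq> psubformulas D \<Longrightarrow> pval top_rank (\<lambda>i. rank (PVar i)) A = rank A"
proof (induction A)
  case (PImp B C)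
  then show ?case using rank_PImp[of C B] psubformulas_refl[of C] by auto
qed (auto simp: rank_PBot rank_PAnd rank_POr)

lemma not_godel_valid: "\<not> godel_valid D"
  unfolding godel_valid_def
  using pval_rank[of D] rank_D_less_top rank_le_top by fastforce

end

theorem godel_valid_LC_thm:
  assumes "godel_valid D"
  shows "LC_thm D"
proof (rule ccontr)
  assume "\<not> LC_thm D"
  then have "\<not> LC_from {} D" using LC_from_empty by blast
  then obtain M where "maximal_not_LC_from M D"
    using ex_maximal_not_LC_from by (auto simp: maximal_not_LC_from_def)
  then show False using assms maximal_not_LC_from.not_godel_valid by blast
qed

section \<open>The term model of \<open>\<epsilon>\<tau>\<close>-formulas\<close>

text \<open>The environment \<open>e\<close> assigns terms to the de Bruijn indices. \<open>arg_max\<close> and \<open>arg_min\<close> are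
  Hilbert choices, which pick a genuine maximizer and minimizer because all values lie in
  \<open>{0..K}\<close>.\<close>

primrec eval_trm :: "nat \<Rightarrow> (('f, 'p) fm \<Rightarrow> nat) \<Rightarrow> (nat \<Rightarrow> ('f, 'p) trm) \<Rightarrow> ('f, 'p) trm \<Rightarrow> ('f, 'p) trm"
and eval_fm :: "nat \<Rightarrow> (('f, 'p) fm \<Rightarrow> nat) \<Rightarrow> (nat \<Rightarrow> ('f, 'p) trm) \<Rightarrow> ('f, 'p) fm \<Rightarrow> nat" where
  "eval_trm K V e (Free x) = Free x"
| "eval_trm K V e (Bnd n) = e n"
| "eval_trm K V e (Fn f ts) = Fn f (map (eval_trm K V e) ts)"
| "eval_trm K V e (Eps A) = arg_max (\<lambda>d. eval_fm K V (case_nat d e) A) (\<lambda>_. True)"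
| "eval_trm K V e (Tau A) = arg_min (\<lambda>d. eval_fm K V (case_nat d e) A) (\<lambda>_. True)"
| "eval_fm K V e (Atom P ts) = min K (V (Atom P (map (eval_trm K V e) ts)))"
| "eval_fm K V e Bot = 0"
| "eval_fm K V e (And A B) = min (eval_fm K V e A) (eval_fm K V e B)"
| "eval_fm K V e (Or A B) = max (eval_fm K V e A) (eval_fm K V e B)"
| "eval_fm K V e (Imp A B) = godel_imp K (eval_fm K V e A) (eval_fm K V e B)"

lemma eval_fm_le_top: "eval_fm K V e A \<le> K"
  by (induction A arbitrary: e) (auto simp: godel_imp_def min_le_iff_disj)

lemma eval_env_cong:
  "lct k t \<Longrightarrow> (\<forall>i<k. e i = e' i) \<Longrightarrow> eval_trm K V e t = eval_trm K V e' t"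
  "lcf k A \<Longrightarrow> (\<forall>i<k. e i = e' i) \<Longrightarrow> eval_fm K V e A = eval_fm K V e' A"
proof (induction t and A arbitrary: k e e' and k e e')
  case (Eps A)
  have "\<forall>i<Suc k. case_nat d e i = case_nat d e' i" for d
    using Eps.prems(2) by (auto split: nat.splits)
  then have "eval_fm K V (case_nat d e) A = eval_fm K V (case_nat d e') A" for d
    using Eps by simp
  then show ?case by simp
next
  case (Tau A)
  have "\<forall>i<Suc k. case_nat d e i = case_nat d e' i" for d
    using Tau.prems(2) by (auto split: nat.splits)
  then have "eval_fm K V (case_nat d e) A = eval_fm K V (case_nat d e') A" for d
    using Tau by simp
  then show ?case by simp
next
  case (Atom P ts)
  then have "map (eval_trm K V e) ts = map (eval_trm K V e') ts"
    by (auto simp: list_all_iff)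
  then show ?case by (simp only: eval_fm.simps)
next
  case (And A B)
  then show ?case using And.IH[of k e e'] by simp
next
  case (Or A B)
  then show ?case using Or.IH[of k e e'] by simp
next
  case (Imp A B)
  then show ?case using Imp.IH[of k e e'] by simp
qed (auto simp: list_all_iff)

lemma eval_open:
  assumes "lct 0 t"
  shows "eval_trm K V e (opent k t s) = eval_trm K V (e(k := eval_trm K V e' t)) s"
    and "eval_fm K V e (openf k t A) = eval_fm K V (e(k := eval_trm K V e' t)) A"
proof (induction s and A arbitrary: k e and k e)
  case (Bnd n)
  then show ?case using eval_env_cong(1)[OF assms] by auto
next
  case (Eps A)
  have "(case_nat d e)(Suc k := u) = case_nat d (e(k := u))" for d u
    by (auto split: nat.splits)
  then show ?case using Eps by (simp del: fun_upd_apply)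
next
  case (Tau A)
  have "(case_nat d e)(Suc k := u) = case_nat d (e(k := u))" for d u
    by (auto split: nat.splits)
  then show ?case using Tau by (simp del: fun_upd_apply)
next
  case (Atom P ts)
  then have "map (eval_trm K V e \<circ> opent k t) ts = map (eval_trm K V (e(k := eval_trm K V e' t))) ts"
    by (auto simp del: fun_upd_apply)
  then show ?case by (simp only: eval_fm.simps openf.simps map_map)
qed auto

lemma eval_openf0:
  assumes "lct 0 t" and "lcf 1 A"
  shows "eval_fm K V e (openf 0 t A) = eval_fm K V (case_nat (eval_trm K V e t) e) A"
proof -
  have "eval_fm K V e (openf 0 t A) = eval_fm K V (e(0 := eval_trm K V e t)) A"
    using eval_open(2)[OF assms(1)] .
  also have "\<dots> = eval_fm K V (case_nat (eval_trm K V e t) e) A"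
    by (rule eval_env_cong(2)[OF assms(2)]) auto
  finally show ?thesis .
qed

lemma critical_eval: "critical A \<Longrightarrow> eval_fm K V e A = K"
proof (induction rule: critical.induct)
  case (crit_eps A t)
  let ?f = "\<lambda>d. eval_fm K V (case_nat d e) A"
  have "\<forall>y. True \<longrightarrow> ?f y < Suc K"
    by (simp add: eval_fm_le_top le_imp_less_Suc)
  then have "?f (eval_trm K V e t) \<le> ?f (arg_max ?f (\<lambda>_. True))"
    using arg_max_nat_le[of "\<lambda>_. True" "eval_trm K V e t" ?f "Suc K"] by blast
  then have "eval_fm K V e (openf 0 t A) \<le> eval_fm K V e (openf 0 (Eps A) A)"
    using crit_eps by (simp add: eval_openf0)
  then show ?case by (simp add: godel_imp_def)
next
  case (crit_tau A t)
  let ?f = "\<lambda>d. eval_fm K V (case_nat d e) A"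
  have "?f (arg_min ?f (\<lambda>_. True)) \<le> ?f (eval_trm K V e t)"
    by (rule arg_min_nat_le) (rule TrueI)
  then have "eval_fm K V e (openf 0 (Tau A) A) \<le> eval_fm K V e (openf 0 t A)"
    using crit_tau by (simp add: eval_openf0)
  then show ?case by (simp add: godel_imp_def)
qed

lemma eval_psubst: "eval_fm K V e (psubst \<sigma> \<phi>) = pval K (\<lambda>i. eval_fm K V e (\<sigma> i)) \<phi>"
  by (induction \<phi>) auto

lemma deriv_et_LC_eval: "deriv_et_LC A \<Longrightarrow> eval_fm K V e A = K"
proof (induction rule: deriv_et_LC.induct)
  case (et_inst \<phi> \<sigma>)
  have "pval K (\<lambda>i. eval_fm K V e (\<sigma> i)) \<phi> = K"
    using LC_thm_godel_valid[OF et_inst(1)] unfolding godel_valid_def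
    by (simp add: eval_fm_le_top)
  then show ?case by (simp add: eval_psubst)
next
  case (et_crit A)
  then show ?case by (rule critical_eval)
next
  case (et_mp A B)
  then show ?case using eval_fm_le_top[of K V e B] by (auto simp: godel_imp_def split: if_splits)
qed

section \<open>Propositional skeletons\<close>

primrec atoms :: "('f, 'p) fm \<Rightarrow> ('f, 'p) fm set" where
  "atoms (Atom P ts) = {Atom P ts}"
| "atoms Bot = {}"
| "atoms (And A B) = atoms A \<union> atoms B"
| "atoms (Or A B) = atoms A \<union> atoms B"
| "atoms (Imp A B) = atoms A \<union> atoms B"

primrec skeleton :: "(('f, 'p) fm \<Rightarrow> nat) \<Rightarrow> ('f, 'p) fm \<Rightarrow> pform" where
  "skeleton g (Atom P ts) = PVar (g (Atom P ts))"
| "skeleton g Bot = PBot"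
| "skeleton g (And A B) = PAnd (skeleton g A) (skeleton g B)"
| "skeleton g (Or A B) = POr (skeleton g A) (skeleton g B)"
| "skeleton g (Imp A B) = PImp (skeleton g A) (skeleton g B)"

lemma finite_atoms: "finite (atoms A)"
  by (induction A) auto

lemma lcf_atoms: "lcf k A \<Longrightarrow> a \<in> atoms A \<Longrightarrow> lcf k a"
  by (induction A) auto

lemma psubst_skeleton: "(\<And>a. a \<in> atoms A \<Longrightarrow> \<sigma> (g a) = a) \<Longrightarrow> psubst \<sigma> (skeleton g A) = A"
  by (induction A) auto

lemma eval_et_free:
  "lct 0 t \<Longrightarrow> et_free_t t \<Longrightarrow> eval_trm K V e t = t"
  "lcf 0 A \<Longrightarrow> et_free A \<Longrightarrow> (\<And>a. a \<in> atoms A \<Longrightarrow> min K (V a) = w (g a)) \<Longrightarrow>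
    eval_fm K V e A = pval K w (skeleton g A)"
proof (induction t and A)
  case (Fn f ts)
  then have "map (eval_trm K V e) ts = ts"
    by (auto simp: list_all_iff intro: map_idI)
  then show ?case by simp
next
  case (Atom P ts)
  then have "map (eval_trm K V e) ts = ts"
    by (auto simp: list_all_iff intro: map_idI)
  then show ?case using Atom.prems(3) by simp
qed auto

lemma godel_valid_skeleton:
  assumes "lcf 0 D" and "et_free D" and "deriv_et_LC D"
  shows "godel_valid (skeleton g D)"
  unfolding godel_valid_def
proof (intro allI impI)
  fix K :: nat and w :: "nat \<Rightarrow> nat"
  assume "\<forall>i. w i \<le> K"
  then have "eval_fm K (w \<circ> g) Bnd D = pval K w (skeleton g D)"
    using assms(1,2) by (simp add: eval_et_free(2)[where w = w and g = g] min_absorb2)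
  then show "pval K w (skeleton g D) = K"
    using deriv_et_LC_eval[OF assms(3)] by simp
qed

lemma deriv_LC_if_skeleton_LC_thm:
  assumes "LC_thm (skeleton g D)" and "inj_on g (atoms D)" and "lcf 0 D"
  shows "deriv_LC D"
proof -
  define \<sigma> where "\<sigma> i = (if i \<in> g ` atoms D then inv_into (atoms D) g i else Bot)" for i
  have "lcf 0 (\<sigma> i)" for i
    unfolding \<sigma>_def using lcf_atoms[OF assms(3)] inv_into_into[of _ g "atoms D"] by auto
  then have "deriv_LC (psubst \<sigma> (skeleton g D))"
    by (rule deriv_LC.L_inst[OF assms(1)])
  moreover have "psubst \<sigma> (skeleton g D) = D"
    by (rule psubst_skeleton) (simp add: \<sigma>_def assms(2))
  ultimately show ?thesis by simp
qed

theorem mainTheorem5: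
  fixes D :: "('f, 'p) fm"
  assumes "lcf 0 D"
    and "et_free D"
    and "deriv_et_LC D"
  shows "deriv_LC D"
proof -
  obtain g :: "('f, 'p) fm \<Rightarrow> nat" where "inj_on g (atoms D)"
    using finite_imp_inj_to_nat_seg[OF finite_atoms] by blast
  moreover have "LC_thm (skeleton g D)"
    using godel_valid_skeleton[OF assms] by (rule godel_valid_LC_thm)
  ultimately show ?thesis
    using deriv_LC_if_skeleton_LC_thm assms(1) by blast
qed

end
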